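(* VD is resistant to cloning. For each $f\in\{\mathrm{MF},\mathrm{BC},\mathrm{MS},\mathrm{FT}\}$, resistance to cloning fails: there exist a finite candidate set $C$ and a profile $P$ over $C$ with clones $a,a'$ such that condition (1) or condition (2) of the definition of resistance to cloning is violated.
   Context: Candidates come from a fixed infinite universe; rules are defined for profiles over every finite candidate set $C$. An approval ballot is a nonempty subset $A\subseteq C$; a profile over $C$ is a finite sequence of ballots. For $c\in C$, $P_{-c}$ is the profile over $C\setminus\{c\}$ obtained by removing $c$ from every ballot (ballots that become empty are discarded), and for an axis $\triangleleft$ on $C$, $\triangleleft_{-c}$ is its restriction to $C\setminus\{c\}$. Two candidates $a,a'$ are clones in $P$ if for every ballot $A\in P$, $a\in A$ iff $a'\in A$. An axis rule $f$ is resistant to cloning if for every profile $P$ in which $a,a'$ are clones: (1) for every $\triangleleft\in f(P)$, $\triangleleft_{-a}\in f(P_{-a})$; and (2) for every $\triangleleft^*\in f(P_{-a})$ there is $\triangleleft\in f(P)$ with $\triangleleft_{-a}=\triangleleft^*$. An axis is a strict linear order $\triangleleft$ on $C$; $a\trianglelefteq b$ means $a\triangleleft b$ or $a=b$. A ballot $A$ is an interval of $\triangleleft$ if for all $a,b\in A$ and every $c$ with $a\triangleleft c\triangleleft b$ we have $c\in A$. For a cost function $\mathrm{cost}_f$, the scoring rule returns $f(P)=\arg\min_{\triangleleft}\sum_{A\in P}\mathrm{cost}_f(A,\triangleleft)$ over all axes on $C$. The five rules are the scoring rules (on every $C$) with costs: $\mathrm{cost}_{\mathrm{VD}}(A,\triangleleft)=0$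 if $A$ is an interval of $\triangleleft$ and $1$ otherwise; $\mathrm{cost}_{\mathrm{MF}}(A,\triangleleft)=\min_{x,y\in A,\ x\trianglelefteq y}\big(|\{z\in A: z\triangleleft x \text{ or } y\triangleleft z\}|+|\{z\notin A: x\triangleleft z\triangleleft y\}|\big)$; $\mathrm{cost}_{\mathrm{BC}}(A,\triangleleft)=|\{b\notin A: a\triangleleft b\triangleleft c \text{ for some } a,c\in A\}|$; $\mathrm{cost}_{\mathrm{MS}}(A,\triangleleft)=\sum_{x\in C\setminus A}\min\big(|\{y\in A:y\triangleleft x\}|,\,|\{y\in A:x\triangleleft y\}|\big)$; $\mathrm{cost}_{\mathrm{FT}}(A,\triangleleft)=\sum_{x\in C\setminus A}|\{y\in A:y\triangleleft x\}|\cdot|\{y\in A:x\triangleleft y\}|$. *)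

theory Defs
  imports Main
begin

text \<open>An axis on a finite candidate set C is a duplicate-free list enumerating C,
  read from left to right.\<close>

type_synonym cand = nat
type_synonym axis = "cand list"
type_synonym ballot = "cand set"
type_synonym profile = "ballot list"

definition axes :: "cand set \<Rightarrow> axis set" where
  "axes C = {xs. distinct xs \<and> set xs = C}"

definition lt :: "axis \<Rightarrow> cand \<Rightarrow> cand \<Rightarrow> bool" where
  "lt xs a b \<longleftrightarrow> (\<exists>i j. i < j \<and> j < length xs \<and> xs ! i = a \<and> xs ! j = b)"

definition le :: "axis \<Rightarrow> cand \<Rightarrow> cand \<Rightarrow> bool" where
  "le xs a b \<longleftrightarrow> lt xs a b \<or> a = b"

definition is_profile :: "cand set \<Rightarrow> profile \<Rightarrow> bool" where
  "is_profile C P \<longleftrightarrow> (\<forall>A\<in>set P. A \<noteq> {} \<and> A \<subseteq> C)"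

definition remove_cand :: "cand \<Rightarrow> profile \<Rightarrow> profile" where
  "remove_cand c P = filter (\<lambda>A. A \<noteq> {}) (map (\<lambda>A. A - {c}) P)"

definition restrict_axis :: "cand \<Rightarrow> axis \<Rightarrow> axis" where
  "restrict_axis c xs = filter (\<lambda>x. x \<noteq> c) xs"

definition clones :: "profile \<Rightarrow> cand \<Rightarrow> cand \<Rightarrow> bool" where
  "clones P a a' \<longleftrightarrow> (\<forall>A\<in>set P. a \<in> A \<longleftrightarrow> a' \<in> A)"

type_synonym axis_rule = "cand set \<Rightarrow> profile \<Rightarrow> axis set"

definition resistant_to_cloning :: "axis_rule \<Rightarrow> bool" where
  "resistant_to_cloning f \<longleftrightarrow>
     (\<forall>C P a a'. finite C \<and> is_profile C P \<and> a \<in> C \<and> a' \<in> C \<and> a \<noteq> a' \<and> clones P a a' \<longrightarrow>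
        (\<forall>xs\<in>f C P. restrict_axis a xs \<in> f (C - {a}) (remove_cand a P)) \<and>
        (\<forall>ys\<in>f (C - {a}) (remove_cand a P). \<exists>xs\<in>f C P. restrict_axis a xs = ys))"

definition scoring_rule :: "(ballot \<Rightarrow> axis \<Rightarrow> nat) \<Rightarrow> axis_rule" where
  "scoring_rule cost C P =
     {xs \<in> axes C. \<forall>ys \<in> axes C. (\<Sum>A\<leftarrow>P. cost A xs) \<le> (\<Sum>A\<leftarrow>P. cost A ys)}"

definition is_interval :: "ballot \<Rightarrow> axis \<Rightarrow> bool" where
  "is_interval A xs \<longleftrightarrow> (\<forall>a\<in>A. \<forall>b\<in>A. \<forall>c. lt xs a c \<and> lt xs c b \<longrightarrow> c \<in> A)"

definition cost_VD :: "ballot \<Rightarrow> axis \<Rightarrow> nat" where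
  "cost_VD A xs = (if is_interval A xs then 0 else 1)"

definition cost_MF :: "ballot \<Rightarrow> axis \<Rightarrow> nat" where
  "cost_MF A xs = Min ((\<lambda>(x, y). card {z \<in> A. lt xs z x \<or> lt xs y z}
                                + card {z \<in> set xs - A. lt xs x z \<and> lt xs z y})
                       ` {(x, y). x \<in> A \<and> y \<in> A \<and> le xs x y})"

definition cost_BC :: "ballot \<Rightarrow> axis \<Rightarrow> nat" where
  "cost_BC A xs = card {b \<in> set xs - A. \<exists>a\<in>A. \<exists>c\<in>A. lt xs a b \<and> lt xs b c}"

definition cost_MS :: "ballot \<Rightarrow> axis \<Rightarrow> nat" where
  "cost_MS A xs = (\<Sum>x\<in>set xs - A. min (card {y\<in>A. lt xs y x}) (card {y\<in>A. lt xs x y}))"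

definition cost_FT :: "ballot \<Rightarrow> axis \<Rightarrow> nat" where
  "cost_FT A xs = (\<Sum>x\<in>set xs - A. card {y\<in>A. lt xs y x} * card {y\<in>A. lt xs x y})"

end

theory Submission
  imports Defs "HOL-Combinatorics.Multiset_Permutations"
begin

text \<open>Deleting a candidate never breaks an interval, so restricting an axis to \<open>C - {a}\<close>
  does not increase its VD cost; conversely, an axis on \<open>C - {a}\<close> extends to one on \<open>C\<close> of no
  larger cost by placing \<open>a\<close> right after its clone \<open>a'\<close>. Hence restriction maps the optimal
  axes for \<open>P\<close> exactly onto the optimal axes for \<open>P\<^sub>-\<^sub>a\<close>; only these two monotonicity
  properties of the cost are used. For MF, BC, MS and FT small profiles violate condition (2):
  an optimal axis for \<open>P\<^sub>-\<^sub>a\<close> all of whose extensions (insertions of \<open>a\<close>) are beaten by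
  some axis on \<open>C\<close>.\<close>

lemma lt_Nil [simp, code]: "lt [] a b \<longleftrightarrow> False"
  by (simp add: lt_def)

lemma lt_Cons [code]: "lt (x # xs) a b \<longleftrightarrow> x = a \<and> b \<in> set xs \<or> lt xs a b"
proof
  assume "lt (x # xs) a b"
  then obtain i j where ij: "i < j" "j < Suc (length xs)" "(x # xs) ! i = a" "(x # xs) ! j = b"
    unfolding lt_def by auto
  then obtain j' where j': "j = Suc j'" by (cases j) auto
  show "x = a \<and> b \<in> set xs \<or> lt xs a b"
  proof (cases i)
    case 0
    then show ?thesis using ij j' by auto
  next
    case (Suc i')
    then show ?thesis using ij j' unfolding lt_def by auto
  qed
next
  assume "x = a \<and> b \<in> set xs \<or> lt xs a b"
  then show "lt (x # xs) a b"
  proof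
    assume "x = a \<and> b \<in> set xs"
    then obtain k where "k < length xs" "xs ! k = b" "x = a" by (auto simp: in_set_conv_nth)
    then show ?thesis unfolding lt_def by (intro exI[of _ 0] exI[of _ "Suc k"]) auto
  next
    assume "lt xs a b"
    then obtain i j where "i < j" "j < length xs" "xs ! i = a" "xs ! j = b" unfolding lt_def by auto
    then show ?thesis unfolding lt_def by (intro exI[of _ "Suc i"] exI[of _ "Suc j"]) auto
  qed
qed

lemma lt_imp_mem: "lt xs a b \<Longrightarrow> a \<in> set xs \<and> b \<in> set xs"
  by (induction xs) (auto simp: lt_Cons)

lemma lt_append: "lt (xs @ ys) a b \<longleftrightarrow> lt xs a b \<or> lt ys a b \<or> a \<in> set xs \<and> b \<in> set ys"
  by (induction xs) (auto simp: lt_Cons)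

lemma lt_filterD: "lt (filter Q xs) a b \<Longrightarrow> lt xs a b"
  by (induction xs) (auto simp: lt_Cons split: if_splits)

lemma lt_merge_adjacent:
  assumes "distinct (us @ a' # a # ws)" "lt (us @ a' # a # ws) b c" "(b, c) \<noteq> (a', a)"
  shows "lt (us @ a' # ws) ((id(a := a')) b) ((id(a := a')) c)"
  using assms by (auto simp: lt_append lt_Cons dest: lt_imp_mem)

lemma is_interval_restrict_axis:
  assumes "is_interval A xs"
  shows "is_interval (A - {a}) (restrict_axis a xs)"
  unfolding is_interval_def
proof (intro ballI allI impI)
  fix b d c
  assume b: "b \<in> A - {a}" and d: "d \<in> A - {a}"
    and c: "lt (restrict_axis a xs) b c \<and> lt (restrict_axis a xs) c d"
  have "lt xs b c" "lt xs c d"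
    using c lt_filterD unfolding restrict_axis_def by blast+
  then have "c \<in> A"
    using assms b d unfolding is_interval_def by blast
  moreover have "c \<noteq> a"
    using c by (auto simp: restrict_axis_def dest: lt_imp_mem)
  ultimately show "c \<in> A - {a}" by simp
qed

lemma is_interval_insert_clone:
  assumes xs: "distinct (us @ a' # a # ws)" and clone: "a \<in> A \<longleftrightarrow> a' \<in> A"
    and ys: "is_interval (A - {a}) (us @ a' # ws)"
  shows "is_interval A (us @ a' # a # ws)"
  unfolding is_interval_def
proof (intro ballI allI impI, rule ccontr)
  fix b d c
  assume b: "b \<in> A" and d: "d \<in> A" and c: "c \<notin> A"
    and bcd: "lt (us @ a' # a # ws) b c \<and> lt (us @ a' # a # ws) c d"
  define s where "s = id(a := a')"
  have "(b, c) \<noteq> (a', a)" "(c, d) \<noteq> (a', a)" using b d c clone by auto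
  then have "lt (us @ a' # ws) (s b) (s c)" "lt (us @ a' # ws) (s c) (s d)"
    using bcd lt_merge_adjacent[OF xs] unfolding s_def by simp_all
  moreover have "s b \<in> A - {a}" "s d \<in> A - {a}" "s c \<notin> A - {a}"
    using b d c clone xs by (auto simp: s_def)
  ultimately show False using ys unfolding is_interval_def by blast
qed

lemma cost_VD_restrict_axis: "cost_VD (A - {a}) (restrict_axis a xs) \<le> cost_VD A xs"
  using is_interval_restrict_axis by (auto simp: cost_VD_def)

lemma cost_VD_insert_clone:
  "distinct (us @ a' # a # ws) \<Longrightarrow> (a \<in> A \<longleftrightarrow> a' \<in> A) \<Longrightarrow>
     cost_VD A (us @ a' # a # ws) \<le> cost_VD (A - {a}) (us @ a' # ws)"
  using is_interval_insert_clone by (auto simp: cost_VD_def)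

definition argmin_on :: "('a \<Rightarrow> 'b::linorder) \<Rightarrow> 'a set \<Rightarrow> 'a set" where
  "argmin_on f S = {x \<in> S. \<forall>y\<in>S. f x \<le> f y}"

lemma argmin_on_set_code [code]:
  "argmin_on f (set xs) = (let m = Min (f ` set xs) in Set.filter (\<lambda>x. f x = m) (set xs))"
  by (auto simp: argmin_on_def Let_def intro: Min_eqI[symmetric])

lemma image_argmin_on:
  assumes "r ` S \<subseteq> T"
    and "\<And>x. x \<in> S \<Longrightarrow> g (r x) \<le> f x"
    and "\<And>y. y \<in> T \<Longrightarrow> \<exists>x\<in>S. r x = y \<and> f x \<le> g y"
  shows "r ` argmin_on f S = argmin_on g T"
proof (intro equalityI subsetI)
  fix y assume "y \<in> r ` argmin_on f S"
  then obtain x where x: "x \<in> argmin_on f S" "y = r x" by blast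
  have "g y \<le> g z" if z: "z \<in> T" for z
  proof -
    obtain x' where "x' \<in> S" "f x' \<le> g z" using assms(3) z by blast
    then show ?thesis using x assms(2)[of x] unfolding argmin_on_def by force
  qed
  then show "y \<in> argmin_on g T" using x assms(1) unfolding argmin_on_def by blast
next
  fix y assume y: "y \<in> argmin_on g T"
  then obtain x where x: "x \<in> S" "r x = y" "f x \<le> g y" using assms(3) unfolding argmin_on_def by blast
  have "f x \<le> f z" if "z \<in> S" for z
    using x y assms(1) assms(2)[OF that] that unfolding argmin_on_def by force
  then show "y \<in> r ` argmin_on f S" using x unfolding argmin_on_def by blast
qed

definition total_cost :: "(ballot \<Rightarrow> axis \<Rightarrow> nat) \<Rightarrow> profile \<Rightarrow> axis \<Rightarrow> nat" where
  "total_cost cost P xs = (\<Sum>A\<leftarrow>P. cost A xs)"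

lemma scoring_rule_eq_argmin_on [code]:
  "scoring_rule cost C P = argmin_on (total_cost cost P) (axes C)"
  by (simp add: scoring_rule_def argmin_on_def total_cost_def)

lemma axes_set_code [code]: "axes (set xs) = set (permutations_of_list_impl (remdups xs))"
  by (auto simp: axes_def set_permutations_of_list_impl permutations_of_multiset_def
      set_eq_iff_mset_eq_distinct[symmetric] dest: mset_eq_setD mset_eq_imp_distinct_iff)

lemma resistant_to_cloning_iff_image:
  "resistant_to_cloning f \<longleftrightarrow>
     (\<forall>C P a a'. finite C \<and> is_profile C P \<and> a \<in> C \<and> a' \<in> C \<and> a \<noteq> a' \<and> clones P a a' \<longrightarrow>
        restrict_axis a ` f C P = f (C - {a}) (remove_cand a P))"
proof -
  have image_eq: "r ` X = Y \<longleftrightarrow> (\<forall>x\<in>X. r x \<in> Y) \<and> (\<forall>y\<in>Y. \<exists>x\<in>X. r x = y)"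
    for r :: "axis \<Rightarrow> axis" and X Y
    by auto
  show ?thesis unfolding resistant_to_cloning_def image_eq ..
qed

lemma restrict_axis_axes: "xs \<in> axes C \<Longrightarrow> restrict_axis a xs \<in> axes (C - {a})"
  by (auto simp: axes_def restrict_axis_def)

lemma restrict_axis_split:
  assumes "a \<notin> set us" "a \<notin> set ws"
  shows "restrict_axis a (us @ a # ws) = us @ ws"
proof -
  have "filter (\<lambda>x. x \<noteq> a) us = us" "filter (\<lambda>x. x \<noteq> a) ws = ws"
    using assms by (auto intro!: filter_True)
  then show ?thesis by (simp add: restrict_axis_def)
qed

lemma axes_insert_after:
  assumes ys: "ys \<in> axes (C - {a})" and "a \<in> C" "a' \<in> set ys"
  obtains us ws where "ys = us @ a' # ws" "us @ a' # a # ws \<in> axes C"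
    "restrict_axis a (us @ a' # a # ws) = ys"
proof -
  obtain us ws where uw: "ys = us @ a' # ws" using \<open>a' \<in> set ys\<close> by (meson split_list)
  have "distinct (us @ a' # a # ws)" "set (us @ a' # a # ws) = C"
    using ys uw \<open>a \<in> C\<close> by (auto simp: axes_def)
  then show ?thesis
    using that[OF uw] restrict_axis_split[of a "us @ [a']" ws] uw by (simp add: axes_def)
qed

lemma remove_cand_clones:
  assumes "is_profile C P" "a \<noteq> a'" "clones P a a'"
  shows "remove_cand a P = map (\<lambda>A. A - {a}) P"
proof -
  have "\<forall>A\<in>set P. A - {a} \<noteq> {}"
    using assms unfolding is_profile_def clones_def by blast
  then show ?thesis unfolding remove_cand_def by (simp add: filter_id_conv)
qed

theorem scoring_rule_resistant_to_cloningI: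
  assumes restrict: "\<And>A a xs. cost (A - {a}) (restrict_axis a xs) \<le> cost A xs"
    and insert_clone: "\<And>A a a' us ws. distinct (us @ a' # a # ws) \<Longrightarrow> (a \<in> A \<longleftrightarrow> a' \<in> A) \<Longrightarrow>
          cost A (us @ a' # a # ws) \<le> cost (A - {a}) (us @ a' # ws)"
  shows "resistant_to_cloning (scoring_rule cost)"
  unfolding resistant_to_cloning_iff_image scoring_rule_eq_argmin_on
proof (intro allI impI)
  fix C P a a'
  assume H: "finite C \<and> is_profile C P \<and> a \<in> C \<and> a' \<in> C \<and> a \<noteq> a' \<and> clones P a a'"
  have total_removed: "(\<Sum>A\<leftarrow>remove_cand a P. cost A ys) = (\<Sum>A\<leftarrow>P. cost (A - {a}) ys)" for ys
    using H remove_cand_clones[of C P a a'] by (simp add: o_def)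
  show "restrict_axis a ` argmin_on (total_cost cost P) (axes C) =
        argmin_on (total_cost cost (remove_cand a P)) (axes (C - {a}))"
  proof (rule image_argmin_on)
    show "restrict_axis a ` axes C \<subseteq> axes (C - {a})" using restrict_axis_axes by blast
  next
    fix xs
    show "total_cost cost (remove_cand a P) (restrict_axis a xs) \<le> total_cost cost P xs"
      unfolding total_cost_def total_removed by (rule sum_list_mono) (rule restrict)
  next
    fix ys assume ys: "ys \<in> axes (C - {a})"
    then have "a' \<in> set ys" using H by (auto simp: axes_def)
    with ys H obtain us ws where uw: "ys = us @ a' # ws" "us @ a' # a # ws \<in> axes C"
      "restrict_axis a (us @ a' # a # ws) = ys"
      by (auto elim: axes_insert_after)
    have "total_cost cost P (us @ a' # a # ws) \<le> total_cost cost (remove_cand a P) ys"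
      unfolding total_cost_def total_removed uw(1)
    proof (rule sum_list_mono)
      fix A assume "A \<in> set P"
      then have "a \<in> A \<longleftrightarrow> a' \<in> A" using H by (auto simp: clones_def)
      then show "cost A (us @ a' # a # ws) \<le> cost (A - {a}) (us @ a' # ws)"
        using uw(2) insert_clone by (auto simp: axes_def)
    qed
    then show "\<exists>xs\<in>axes C. restrict_axis a xs = ys \<and>
                 total_cost cost P xs \<le> total_cost cost (remove_cand a P) ys"
      using uw by blast
  qed
qed

theorem VD_resistant_to_cloning: "resistant_to_cloning (scoring_rule cost_VD)"
  using cost_VD_restrict_axis cost_VD_insert_clone by (rule scoring_rule_resistant_to_cloningI)

fun insertions :: "'a \<Rightarrow> 'a list \<Rightarrow> 'a list list" where
  "insertions a [] = [[a]]"
| "insertions a (y # ys) = (a # y # ys) # map ((#) y) (insertions a ys)"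

lemma append_Cons_in_insertions: "us @ a # ws \<in> set (insertions a (us @ ws))"
  by (induction us) (cases ws; simp)+

lemma scoring_rule_not_resistant_to_cloningI:
  assumes "is_profile C P" "a \<in> C" "a' \<in> C" "a \<noteq> a'" "clones P a a'"
    and ys: "ys \<in> scoring_rule cost (C - {a}) (remove_cand a P)"
    and zs: "zs \<in> axes C"
    and worse: "total_cost cost P zs < Min (total_cost cost P ` set (insertions a ys))"
  shows "\<not> resistant_to_cloning (scoring_rule cost)"
proof
  assume "resistant_to_cloning (scoring_rule cost)"
  then obtain xs where xs: "xs \<in> scoring_rule cost C P" "restrict_axis a xs = ys"
    using assms(1-5) ys zs unfolding resistant_to_cloning_def axes_def by blast
  then have "xs \<in> axes C" and optimal: "total_cost cost P xs \<le> total_cost cost P zs"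
    using zs by (auto simp: scoring_rule_eq_argmin_on argmin_on_def)
  then obtain us ws where split: "xs = us @ a # ws" "a \<notin> set us" "a \<notin> set ws"
    using \<open>a \<in> C\<close> by (auto simp: axes_def dest: split_list)
  then have "xs \<in> set (insertions a ys)"
    using xs(2) append_Cons_in_insertions[of us a ws] by (simp add: restrict_axis_split)
  then have "Min (total_cost cost P ` set (insertions a ys)) \<le> total_cost cost P xs"
    by (intro Min_le) auto
  with optimal worse show False by linarith
qed

text \<open>The set of pairs in the definition of \<open>cost_MF\<close> is a comprehension over all pairs
  of candidates; as a filter on \<open>A \<times> A\<close> it becomes executable.\<close>

lemma cost_MF_code [code]:
  "cost_MF A xs = Min ((\<lambda>(x, y). card {z \<in> A. lt xs z x \<or> lt xs y z}
                                + card {z \<in> set xs - A. lt xs x z \<and> lt xs z y})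
                       ` Set.filter (\<lambda>(x, y). le xs x y) (A \<times> A))"
  unfolding cost_MF_def by (rule arg_cong[where f = Min]) auto

lemma BC_not_resistant_to_cloning: "\<not> resistant_to_cloning (scoring_rule cost_BC)"
  by (rule scoring_rule_not_resistant_to_cloningI[where C = "{0, 1, 2, 3}"
        and P = "[{2, 3}, {0, 1, 2}, {0, 1, 3}]" and a = 0 and a' = 1
        and ys = "[2, 1, 3]" and zs = "[0, 1, 2, 3]"]; code_simp)

lemma MS_not_resistant_to_cloning: "\<not> resistant_to_cloning (scoring_rule cost_MS)"
  by (rule scoring_rule_not_resistant_to_cloningI[where C = "{0, 1, 2, 3}"
        and P = "[{2, 3}, {0, 1, 2}, {0, 1, 3}]" and a = 0 and a' = 1
        and ys = "[2, 1, 3]" and zs = "[0, 1, 2, 3]"]; code_simp)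

lemma FT_not_resistant_to_cloning: "\<not> resistant_to_cloning (scoring_rule cost_FT)"
  by (rule scoring_rule_not_resistant_to_cloningI[where C = "{0, 1, 2, 3, 4}"
        and P = "[{2, 3}, {2, 4}, {0, 1, 2}]" and a = 0 and a' = 1
        and ys = "[1, 4, 2, 3]" and zs = "[0, 1, 2, 3, 4]"]; code_simp)

lemma MF_not_resistant_to_cloning: "\<not> resistant_to_cloning (scoring_rule cost_MF)"
  by (rule scoring_rule_not_resistant_to_cloningI[where C = "{0, 1, 2, 3, 4, 5}"
        and P = "[{0, 1, 2, 4}, {2, 3, 4, 5}, {0, 1, 2, 5}, {3, 5}]" and a = 0 and a' = 1
        and ys = "[4, 2, 1, 5, 3]" and zs = "[0, 1, 2, 4, 3, 5]"]; code_simp)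

theorem mainTheorem10:
  shows "resistant_to_cloning (scoring_rule cost_VD) \<and>
         (\<forall>cost \<in> {cost_MF, cost_BC, cost_MS, cost_FT}.
            \<not> resistant_to_cloning (scoring_rule cost))"
  using VD_resistant_to_cloning MF_not_resistant_to_cloning BC_not_resistant_to_cloning
    MS_not_resistant_to_cloning FT_not_resistant_to_cloning
  by auto

end
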